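(* Let $Y$ be a topological space and let $f\colon[0,1]\to Y$ be a function whose graph $\{(x,f(x))\colon x\in[0,1]\}$, with the subspace topology inherited from the product $[0,1]\times Y$, is connected and locally connected. Then $f$ is continuous.
   Context: $[0,1]$ carries its usual Euclidean topology. *)

theory Defs
  imports "HOL-Analysis.Analysis"
begin

end

theory Submission
  imports Defs
begin

text \<open>Let \<open>x\<^sub>0 \<in> S\<close> and \<open>f x\<^sub>0 \<in> V\<close> with \<open>V\<close> open. By local connectedness the graph point
  \<open>(x\<^sub>0, f x\<^sub>0)\<close> has a connected open neighbourhood \<open>U\<close> inside the graph over \<open>f -` V\<close>;
  its projection \<open>I\<close> is an interval in \<open>f -` V\<close> containing \<open>x\<^sub>0\<close>. If \<open>I\<close> had no point
  to the right of \<open>x\<^sub>0\<close> although \<open>S\<close> does, the graph points over \<open>{..x\<^sub>0}\<close> would form a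
  proper clopen set: closed as a preimage, and open as the union of the graph points over
  \<open>{..<x\<^sub>0}\<close> with \<open>U\<close>, because \<open>(x\<^sub>0, f x\<^sub>0)\<close> is the only graph point over \<open>x\<^sub>0\<close>.
  Together with the symmetric argument, \<open>I\<close> is a neighbourhood of \<open>x\<^sub>0\<close> in \<open>S\<close>.\<close>

definition graph_topology :: "real set \<Rightarrow> 'b topology \<Rightarrow> (real \<Rightarrow> 'b) \<Rightarrow> (real \<times> 'b) topology"
  where "graph_topology S Y f =
    subtopology (prod_topology (top_of_set S) Y) ((\<lambda>x. (x, f x)) ` S)"

lemma topspace_graph_topology:
  assumes "f \<in> S \<rightarrow> topspace Y"
  shows "topspace (graph_topology S Y f) = (\<lambda>x. (x, f x)) ` S"
  using assms by (auto simp: graph_topology_def)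

lemma continuous_map_fst_graph_topology:
  "continuous_map (graph_topology S Y f) euclidean fst"
  unfolding graph_topology_def
  by (metis continuous_map_from_subtopology continuous_map_fst continuous_map_into_fulltopology)

lemma connected_space_image_subset_insert_open:
  assumes conn: "connected_space X" and p: "continuous_map X euclidean p"
    and "open W" "closed (insert (p z\<^sub>0) W)"
    and U: "openin X U" "z\<^sub>0 \<in> U" "p ` U \<subseteq> insert (p z\<^sub>0) W"
    and unique: "\<And>z. z \<in> topspace X \<Longrightarrow> p z = p z\<^sub>0 \<Longrightarrow> z = z\<^sub>0"
  shows "p ` topspace X \<subseteq> insert (p z\<^sub>0) W"
proof -
  define K where "K = {z \<in> topspace X. p z \<in> insert (p z\<^sub>0) W}"
  have "closedin X K"
    unfolding K_def using p \<open>closed (insert (p z\<^sub>0) W)\<close>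
    by (simp only: closed_closedin closedin_continuous_map_preimage)
  moreover have "K = {z \<in> topspace X. p z \<in> W} \<union> U"
    using U unique openin_subset[OF U(1)] by (auto simp: K_def)
  then have "openin X K"
    using p \<open>open W\<close> U(1) by (simp add: openin_Un openin_continuous_map_preimage)
  moreover have "z\<^sub>0 \<in> K"
    using U openin_subset[OF U(1)] by (auto simp: K_def)
  ultimately have "K = topspace X"
    using conn connected_space_clopen_in by blast
  then show ?thesis by (auto simp: K_def)
qed

lemma interval_neighbourhood_within:
  fixes I S :: "real set"
  assumes "is_interval I" "x\<^sub>0 \<in> I" "x\<^sub>0 \<in> S"
    and right: "S \<subseteq> {..x\<^sub>0} \<or> (\<exists>b\<in>I. x\<^sub>0 < b)"
    and left: "S \<subseteq> {x\<^sub>0..} \<or> (\<exists>a\<in>I. a < x\<^sub>0)"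
  shows "\<exists>T. openin (top_of_set S) T \<and> x\<^sub>0 \<in> T \<and> T \<subseteq> I"
proof -
  obtain a where a: "a < x\<^sub>0" "S \<subseteq> {x\<^sub>0..} \<or> a \<in> I"
    using left by (metis lt_ex)
  obtain b where b: "x\<^sub>0 < b" "S \<subseteq> {..x\<^sub>0} \<or> b \<in> I"
    using right by (metis gt_ex)
  have convex_I: "\<And>u w v. u \<in> I \<Longrightarrow> w \<in> I \<Longrightarrow> u \<le> v \<Longrightarrow> v \<le> w \<Longrightarrow> v \<in> I"
    using assms(1) unfolding is_interval_1 by blast
  have "S \<inter> {a<..<b} \<subseteq> I"
  proof
    fix t assume t: "t \<in> S \<inter> {a<..<b}"
    consider "t = x\<^sub>0" | "t < x\<^sub>0" "a \<in> I" | "x\<^sub>0 < t" "b \<in> I"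
      using t a(2) b(2) by fastforce
    then show "t \<in> I"
    proof cases
      case 2
      show ?thesis
        by (rule convex_I[of a "x\<^sub>0" t]) (use 2 t \<open>x\<^sub>0 \<in> I\<close> in auto)
    next
      case 3
      show ?thesis
        by (rule convex_I[of "x\<^sub>0" b t]) (use 3 t \<open>x\<^sub>0 \<in> I\<close> in auto)
    qed (use \<open>x\<^sub>0 \<in> I\<close> in simp)
  qed
  moreover have "openin (top_of_set S) (S \<inter> {a<..<b})"
    by (simp add: openin_open_Int)
  moreover have "x\<^sub>0 \<in> S \<inter> {a<..<b}"
    using a(1) b(1) \<open>x\<^sub>0 \<in> S\<close> by simp
  ultimately show ?thesis by blast
qed

lemma fst_image_neighbourhood_graph:
  assumes f: "f \<in> S \<rightarrow> topspace Y" and x\<^sub>0: "x\<^sub>0 \<in> S"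
    and conn: "connected_space (graph_topology S Y f)"
    and U: "openin (graph_topology S Y f) U" "connectedin (graph_topology S Y f) U"
      "(x\<^sub>0, f x\<^sub>0) \<in> U"
  shows "\<exists>T. openin (top_of_set S) T \<and> x\<^sub>0 \<in> T \<and> T \<subseteq> fst ` U"
proof (rule interval_neighbourhood_within)
  let ?G = "graph_topology S Y f"
  have p: "continuous_map ?G euclidean fst"
    by (rule continuous_map_fst_graph_topology)
  have graph: "topspace ?G = (\<lambda>x. (x, f x)) ` S"
    using f by (rule topspace_graph_topology)
  have unique: "\<And>z. z \<in> topspace ?G \<Longrightarrow> fst z = fst (x\<^sub>0, f x\<^sub>0) \<Longrightarrow> z = (x\<^sub>0, f x\<^sub>0)"
    using graph by auto
  have "connectedin euclidean (fst ` U)"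
    using p U(2) by (rule connectedin_continuous_map_image)
  then show "is_interval (fst ` U)"
    by (simp add: is_interval_connected_1)
  show "x\<^sub>0 \<in> fst ` U" "x\<^sub>0 \<in> S"
    using U(3) x\<^sub>0 by force+
  show "S \<subseteq> {..x\<^sub>0} \<or> (\<exists>b\<in>fst ` U. x\<^sub>0 < b)"
  proof (rule disjCI)
    assume "\<not> (\<exists>b\<in>fst ` U. x\<^sub>0 < b)"
    then have "fst ` U \<subseteq> {..x\<^sub>0}" by force
    moreover have "insert x\<^sub>0 {..<x\<^sub>0} = {..x\<^sub>0}" by auto
    ultimately have "fst ` topspace ?G \<subseteq> {..x\<^sub>0}"
      using connected_space_image_subset_insert_open[OF conn p _ _ U(1,3) _ unique, of "{..<x\<^sub>0}"]
      by force
    then show "S \<subseteq> {..x\<^sub>0}" using graph by force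
  qed
  show "S \<subseteq> {x\<^sub>0..} \<or> (\<exists>a\<in>fst ` U. a < x\<^sub>0)"
  proof (rule disjCI)
    assume "\<not> (\<exists>a\<in>fst ` U. a < x\<^sub>0)"
    then have "fst ` U \<subseteq> {x\<^sub>0..}" by force
    moreover have "insert x\<^sub>0 {x\<^sub>0<..} = {x\<^sub>0..}" by auto
    ultimately have "fst ` topspace ?G \<subseteq> {x\<^sub>0..}"
      using connected_space_image_subset_insert_open[OF conn p _ _ U(1,3) _ unique, of "{x\<^sub>0<..}"]
      by force
    then show "S \<subseteq> {x\<^sub>0..}" using graph by force
  qed
qed

theorem continuous_map_if_graph_locally_connected:
  assumes f: "f \<in> S \<rightarrow> topspace Y"
    and conn: "connected_space (graph_topology S Y f)"
    and lc: "locally_connected_space (graph_topology S Y f)"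
  shows "continuous_map (top_of_set S) Y f"
  unfolding continuous_map_openin_preimage_eq
proof (intro conjI allI impI)
  show "f \<in> topspace (top_of_set S) \<rightarrow> topspace Y"
    using f by simp
  fix V assume V: "openin Y V"
  let ?G = "graph_topology S Y f"
  show "openin (top_of_set S) (topspace (top_of_set S) \<inter> f -` V)"
    unfolding openin_subopen[of _ "topspace (top_of_set S) \<inter> f -` V"]
  proof
    fix x\<^sub>0 assume "x\<^sub>0 \<in> topspace (top_of_set S) \<inter> f -` V"
    then have x\<^sub>0: "x\<^sub>0 \<in> S" "f x\<^sub>0 \<in> V" by auto
    have "openin (prod_topology (top_of_set S) Y) (S \<times> V)"
      using V by (simp add: openin_prod_Times_iff)
    then have "openin ?G ((\<lambda>x. (x, f x)) ` S \<inter> (S \<times> V))"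
      unfolding graph_topology_def by (metis inf_commute openin_subtopology_Int2)
    moreover have "(x\<^sub>0, f x\<^sub>0) \<in> (\<lambda>x. (x, f x)) ` S \<inter> (S \<times> V)"
      using x\<^sub>0 by auto
    ultimately obtain U where U: "openin ?G U" "connectedin ?G U" "(x\<^sub>0, f x\<^sub>0) \<in> U"
        "U \<subseteq> (\<lambda>x. (x, f x)) ` S \<inter> (S \<times> V)"
      using lc unfolding locally_connected_space_alt neighbourhood_base_of by blast
    obtain T where T: "openin (top_of_set S) T" "x\<^sub>0 \<in> T" "T \<subseteq> fst ` U"
      using fst_image_neighbourhood_graph[OF f x\<^sub>0(1) conn U(1-3)] by blast
    have "fst ` U \<subseteq> topspace (top_of_set S) \<inter> f -` V"
      using U(4) by fastforce
    with T(3) have "T \<subseteq> topspace (top_of_set S) \<inter> f -` V"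
      by (rule order_trans)
    with T(1,2) show "\<exists>T. openin (top_of_set S) T \<and> x\<^sub>0 \<in> T \<and>
        T \<subseteq> topspace (top_of_set S) \<inter> f -` V"
      by blast
  qed
qed

theorem mainTheorem4:
  fixes Y :: "'b topology" and f :: "real \<Rightarrow> 'b"
  assumes "f \<in> {0..1} \<rightarrow> topspace Y"
    and "connected_space (subtopology (prod_topology (top_of_set {0..1::real}) Y)
                           ((\<lambda>x. (x, f x)) ` {0..1}))"
    and "locally_connected_space (subtopology (prod_topology (top_of_set {0..1::real}) Y)
                           ((\<lambda>x. (x, f x)) ` {0..1}))"
  shows "continuous_map (top_of_set {0..1::real}) Y f"
  by (rule continuous_map_if_graph_locally_connected)
    (use assms in \<open>simp_all add: graph_topology_def\<close>)

end
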